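(* Let $F:\mathbb{R}^p\to\mathbb{R}$ be bounded from below by a constant $F_{l.b.}$, i.e. $F(x)\ge F_{l.b.}$ for all $x\in\mathbb{R}^p$, and suppose that the gradient $\dot F(x)=\nabla F(x)$ exists for every $x\in\mathbb{R}^p$ and that $\dot F$ is locally Lipschitz continuous on $\mathbb{R}^p$. Let $x_0\in\mathbb{R}^p$, let $\{M_k: k\ge 0\}\subset\mathbb{R}^{p\times p}$ be symmetric positive definite matrices, and define $x_{k+1}=x_k-M_k\dot F(x_k)$ for $k\ge 0$. Then for every $R\ge 0$ there exists a constant $C_R>0$ such that for all $k\ge 0$, $$[F(x_{k+1})-F_{l.b.}]\,\chi_{k+1}^0(R)\le \Big[F(x_k)-F_{l.b.}-\dot F(x_k)^\intercal M_k\dot F(x_k)+C_R\|M_k\dot F(x_k)\|_2^2\Big]\chi_k^0(R).$$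
   Context: For $R>0$ (or $R\ge 0$), $z\in\mathbb{R}^p$ and $k\ge 0$, $\chi_k^z(R)$ equals $1$ if $\|x_j-z\|_2\le R$ for all $0\le j\le k$, and equals $0$ otherwise. In particular $\chi_k^0(R)=1$ iff $\|x_j\|_2\le R$ for all $j\le k$. *)

theory Defs
  imports "HOL-Analysis.Analysis"
begin

definition chi :: "(nat \<Rightarrow> real ^ 'p) \<Rightarrow> nat \<Rightarrow> real ^ 'p \<Rightarrow> real \<Rightarrow> real" where
  "chi x k z R = (if (\<forall>j\<le>k. norm (x j - z) \<le> R) then 1 else 0)"

definition locally_lipschitz_on :: "'a::metric_space set \<Rightarrow> ('a \<Rightarrow> 'b::metric_space) \<Rightarrow> bool" where
  "locally_lipschitz_on S f \<longleftrightarrow>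
     (\<forall>x\<in>S. \<exists>e>0. \<exists>L. L-lipschitz_on (cball x e \<inter> S) f)"

definition sym_pos_def :: "real ^ 'n ^ 'n \<Rightarrow> bool" where
  "sym_pos_def A \<longleftrightarrow> transpose A = A \<and> (\<forall>v. v \<noteq> 0 \<longrightarrow> v \<bullet> (A *v v) > 0)"

end

theory Submission
  imports Defs
begin

text \<open>On the ball of radius R + 1 the gradient is L-Lipschitz, so when both x k and x (k + 1) lie
  in the ball of radius R the descent lemma bounds F (x (k + 1)) by
  F (x k) - G (x k) \<bullet> v + L * norm v ^ 2, where v = M k *v G (x k).
  When only x k lies in the ball, the right-hand side must be shown nonnegative: a gradient step
  of a suitable size t from x k cannot go below the lower bound, so
  t / 2 * norm (G (x k)) ^ 2 \<le> F (x k) - Flb, and Young's inequality absorbs G (x k) \<bullet> v into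
  this term plus norm v ^ 2 / (2 * t). Hence C = L + 1 / (2 * t) works.\<close>

lemma inner_le_Young:
  fixes a b :: "'a::real_inner"
  assumes "0 < t"
  shows "a \<bullet> b \<le> t / 2 * (norm a)\<^sup>2 + 1 / (2 * t) * (norm b)\<^sup>2"
proof -
  have "t * (a \<bullet> b) = ((norm (t *\<^sub>R a))\<^sup>2 + (norm b)\<^sup>2 - (norm (t *\<^sub>R a - b))\<^sup>2) / 2"
    using dot_norm_neg[of "t *\<^sub>R a" b] by simp
  also have "\<dots> \<le> (t\<^sup>2 * (norm a)\<^sup>2 + (norm b)\<^sup>2) / 2"
    by (simp add: power_mult_distrib)
  finally show ?thesis using assms by (simp add: field_simps power2_eq_square)
qed

lemma locally_lipschitz_on_imp_lipschitz_on_compact: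
  assumes lip: "locally_lipschitz_on S f" and "compact K" "K \<subseteq> S"
  obtains L where "L-lipschitz_on K f"
proof -
  have "local_lipschitz {0::real} K (\<lambda>_. f)"
  proof (rule local_lipschitzI)
    fix t :: real and x assume "x \<in> K"
    then obtain e L where "e > 0" "L-lipschitz_on (cball x e \<inter> S) f"
      using lip \<open>K \<subseteq> S\<close> unfolding locally_lipschitz_on_def by blast
    moreover have "L-lipschitz_on (cball x e \<inter> K) f"
      using calculation(2) by (rule lipschitz_on_subset) (use \<open>K \<subseteq> S\<close> in blast)
    ultimately show "\<exists>u>0. \<exists>L. \<forall>t\<in>cball t u \<inter> {0}. L-lipschitz_on (cball x u \<inter> K) f"
      by blast
  qed
  from local_lipschitz_compact_implies_lipschitz[OF this \<open>compact K\<close> compact_sing] that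
  show ?thesis by auto
qed

text \<open>The descent lemma, with the cruder constant L in place of L/2.\<close>
lemma lipschitz_gradient_descent:
  fixes F :: "'a::real_inner \<Rightarrow> real"
  assumes grad: "\<And>y. (F has_derivative (\<lambda>h. G y \<bullet> h)) (at y)"
    and L: "L-lipschitz_on S G" and S: "convex S" and y: "y \<in> S" and z: "z \<in> S"
  shows "F z \<le> F y + G y \<bullet> (z - y) + L * (norm (z - y))\<^sup>2"
proof -
  define d where "d = z - y"
  define f where "f t = F (y + t *\<^sub>R d) - t * (G y \<bullet> d)" for t :: real
  have f_deriv: "(f has_derivative (\<lambda>h. h * ((G (y + t *\<^sub>R d) - G y) \<bullet> d))) (at t within {0..1})" for t
  proof -
    have "((\<lambda>t. y + t *\<^sub>R d) has_derivative (\<lambda>h. h *\<^sub>R d)) (at t within {0..1})"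
      by (auto intro!: derivative_eq_intros)
    from has_derivative_in_compose[OF this has_derivative_at_withinI[OF grad]]
    have "((\<lambda>t. F (y + t *\<^sub>R d)) has_derivative (\<lambda>h. G (y + t *\<^sub>R d) \<bullet> (h *\<^sub>R d))) (at t within {0..1})"
      by (simp add: o_def)
    then have "(f has_derivative (\<lambda>h. G (y + t *\<^sub>R d) \<bullet> (h *\<^sub>R d) - h * (G y \<bullet> d))) (at t within {0..1})"
      unfolding f_def by (auto intro!: derivative_eq_intros)
    then show ?thesis by (simp add: algebra_simps)
  qed
  obtain u where u: "u \<in> {0..1}" and mvt: "f 1 - f 0 = (G (y + u *\<^sub>R d) - G y) \<bullet> d"
    using mvt_very_simple[of 0 1 f, OF _ f_deriv] by auto
  have "y + u *\<^sub>R d = (1 - u) *\<^sub>R y + u *\<^sub>R z" by (simp add: d_def algebra_simps)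
  then have yu: "y + u *\<^sub>R d \<in> S" using S y z u by (simp add: convex_alt)
  have "(G (y + u *\<^sub>R d) - G y) \<bullet> d \<le> norm (G (y + u *\<^sub>R d) - G y) * norm d"
    by (rule norm_cauchy_schwarz)
  also have "\<dots> \<le> L * norm (u *\<^sub>R d) * norm d"
    using lipschitz_on_normD[OF L yu y] by (simp add: mult_right_mono)
  also have "\<dots> \<le> L * norm d * norm d"
    using u lipschitz_on_nonneg[OF L] by (auto intro!: mult_right_mono mult_left_mono mult_left_le_one_le)
  finally show ?thesis using mvt unfolding f_def d_def by (simp add: power2_eq_square algebra_simps)
qed

lemma gradient_step_decrease:
  fixes F :: "'a::real_inner \<Rightarrow> real"
  assumes grad: "\<And>y. (F has_derivative (\<lambda>h. G y \<bullet> h)) (at y)"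
    and L: "L-lipschitz_on S G" and "convex S" and "y \<in> S" and "y - t *\<^sub>R G y \<in> S"
    and "0 \<le> t" and "2 * L * t \<le> 1"
  shows "F (y - t *\<^sub>R G y) \<le> F y - t / 2 * (norm (G y))\<^sup>2"
proof -
  have "F (y - t *\<^sub>R G y) \<le> F y + G y \<bullet> (y - t *\<^sub>R G y - y) + L * (norm (y - t *\<^sub>R G y - y))\<^sup>2"
    using lipschitz_gradient_descent[OF grad L assms(3-5)] .
  also have "\<dots> = F y - t * (norm (G y))\<^sup>2 + (L * t) * t * (norm (G y))\<^sup>2"
    using \<open>0 \<le> t\<close> by (simp add: dot_square_norm power_mult_distrib power2_eq_square)
  also have "(L * t) * t * (norm (G y))\<^sup>2 \<le> 1 / 2 * t * (norm (G y))\<^sup>2"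
    using assms(6,7) by (intro mult_right_mono) auto
  finally show ?thesis by simp
qed

lemma gradient_norm_sq_le_gap:
  fixes F :: "'a::euclidean_space \<Rightarrow> real"
  assumes lb: "\<And>y. Flb \<le> F y"
    and grad: "\<And>y. (F has_derivative (\<lambda>h. G y \<bullet> h)) (at y)"
    and L: "L-lipschitz_on (cball 0 (R + 1)) G"
  obtains t where "t > 0" and "\<And>y. norm y \<le> R \<Longrightarrow> t / 2 * (norm (G y))\<^sup>2 \<le> F y - Flb"
proof -
  have "continuous_on (cball 0 R) G"
    by (rule lipschitz_on_continuous_on[OF lipschitz_on_subset[OF L]]) auto
  then have "bounded (G ` cball 0 R)"
    by (intro compact_imp_bounded compact_continuous_image compact_cball)
  then obtain B where "B > 0" and "\<forall>z \<in> G ` cball 0 R. norm z \<le> B"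
    unfolding bounded_pos by blast
  then have B: "norm (G y) \<le> B" if "norm y \<le> R" for y
    using that by simp
  have "L \<ge> 0" using lipschitz_on_nonneg[OF L] .
  define t where "t = 1 / (2 * L + B)"
  have "t > 0" and "t * B \<le> 1" and "2 * L * t \<le> 1"
    unfolding t_def using \<open>L \<ge> 0\<close> \<open>B > 0\<close> by (auto simp: field_simps)
  have "t / 2 * (norm (G y))\<^sup>2 \<le> F y - Flb" if "norm y \<le> R" for y
  proof -
    have "norm (t *\<^sub>R G y) \<le> 1"
      using B[OF that] \<open>t > 0\<close> \<open>t * B \<le> 1\<close> by (simp add: order_trans[OF mult_left_mono])
    then have "y - t *\<^sub>R G y \<in> cball 0 (R + 1)"
      using that norm_triangle_ineq4[of y "t *\<^sub>R G y"] by simp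
    with that have "F (y - t *\<^sub>R G y) \<le> F y - t / 2 * (norm (G y))\<^sup>2"
      using \<open>t > 0\<close> \<open>2 * L * t \<le> 1\<close>
      by (intro gradient_step_decrease[OF grad L]) auto
    then show ?thesis using lb[of "y - t *\<^sub>R G y"] by simp
  qed
  with \<open>t > 0\<close> show ?thesis using that by blast
qed

lemma gradient_step_bound:
  fixes F :: "'a::euclidean_space \<Rightarrow> real"
  assumes lb: "\<And>y. Flb \<le> F y"
    and grad: "\<And>y. (F has_derivative (\<lambda>h. G y \<bullet> h)) (at y)"
    and L: "L-lipschitz_on (cball 0 (R + 1)) G"
  obtains C where "C > 0"
    and "\<And>y v. norm y \<le> R \<Longrightarrow> 0 \<le> F y - Flb - G y \<bullet> v + C * (norm v)\<^sup>2"
    and "\<And>y v. norm y \<le> R \<Longrightarrow> norm (y - v) \<le> R \<Longrightarrow>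
           F (y - v) - Flb \<le> F y - Flb - G y \<bullet> v + C * (norm v)\<^sup>2"
proof -
  obtain t where "t > 0" and gap: "\<And>y. norm y \<le> R \<Longrightarrow> t / 2 * (norm (G y))\<^sup>2 \<le> F y - Flb"
    using gradient_norm_sq_le_gap[OF lb grad L] by blast
  define C where "C = L + 1 / (2 * t)"
  have "L \<ge> 0" using lipschitz_on_nonneg[OF L] .
  moreover have "1 / (2 * t) > 0" using \<open>t > 0\<close> by simp
  ultimately have "C > 0" and "L \<le> C" and "1 / (2 * t) \<le> C"
    unfolding C_def by linarith+
  have C_ge: "L * (norm v)\<^sup>2 \<le> C * (norm v)\<^sup>2" "1 / (2 * t) * (norm v)\<^sup>2 \<le> C * (norm v)\<^sup>2"
    for v :: 'a
    using \<open>L \<le> C\<close> \<open>1 / (2 * t) \<le> C\<close> by (meson mult_right_mono zero_le_power2)+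
  have "0 \<le> F y - Flb - G y \<bullet> v + C * (norm v)\<^sup>2" if "norm y \<le> R" for y v
    using inner_le_Young[OF \<open>t > 0\<close>, of "G y" v] gap[OF that] C_ge(2)[of v] by linarith
  moreover have "F (y - v) - Flb \<le> F y - Flb - G y \<bullet> v + C * (norm v)\<^sup>2"
    if "norm y \<le> R" and "norm (y - v) \<le> R" for y v
  proof -
    have "y \<in> cball 0 (R + 1)" "y - v \<in> cball 0 (R + 1)" using that by auto
    from lipschitz_gradient_descent[OF grad L convex_cball this]
    have "F (y - v) \<le> F y - G y \<bullet> v + L * (norm v)\<^sup>2" by simp
    then show ?thesis using C_ge(1)[of v] by linarith
  qed
  ultimately show ?thesis using that \<open>C > 0\<close> by blast
qed

lemma mult_chi_Suc_le:
  assumes "(\<forall>j\<le>Suc k. norm (x j - z) \<le> R) \<Longrightarrow> a \<le> b"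
    and "(\<forall>j\<le>k. norm (x j - z) \<le> R) \<Longrightarrow> 0 \<le> b"
  shows "a * chi x (Suc k) z R \<le> b * chi x k z R"
  using assms unfolding chi_def by (auto simp: le_Suc_eq)

theorem lemma3p1:
  fixes F :: "real ^ 'p \<Rightarrow> real"
    and G :: "real ^ 'p \<Rightarrow> real ^ 'p"
    and Flb :: real
    and M :: "nat \<Rightarrow> real ^ 'p ^ 'p"
    and x :: "nat \<Rightarrow> real ^ 'p"
  assumes lb: "\<And>y. F y \<ge> Flb"
    and grad: "\<And>y. (F has_derivative (\<lambda>h. G y \<bullet> h)) (at y)"
    and lip: "locally_lipschitz_on UNIV G"
    and M_spd: "\<And>k. sym_pos_def (M k)"
    and iter: "\<And>k. x (Suc k) = x k - M k *v G (x k)"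
  shows "\<forall>R\<ge>0. \<exists>C>0. \<forall>k.
           (F (x (Suc k)) - Flb) * chi x (Suc k) 0 R
           \<le> (F (x k) - Flb - G (x k) \<bullet> (M k *v G (x k))
               + C * (norm (M k *v G (x k)))\<^sup>2) * chi x k 0 R"
proof (intro allI impI)
  fix R :: real
  obtain L where "L-lipschitz_on (cball 0 (R + 1)) G"
    using locally_lipschitz_on_imp_lipschitz_on_compact[OF lip compact_cball] by blast
  then obtain C where "C > 0"
    and nonneg: "\<And>y v. norm y \<le> R \<Longrightarrow> 0 \<le> F y - Flb - G y \<bullet> v + C * (norm v)\<^sup>2"
    and step: "\<And>y v. norm y \<le> R \<Longrightarrow> norm (y - v) \<le> R \<Longrightarrow>
                 F (y - v) - Flb \<le> F y - Flb - G y \<bullet> v + C * (norm v)\<^sup>2"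
    using gradient_step_bound[OF lb grad] by metis
  have "(F (x (Suc k)) - Flb) * chi x (Suc k) 0 R
        \<le> (F (x k) - Flb - G (x k) \<bullet> (M k *v G (x k)) + C * (norm (M k *v G (x k)))\<^sup>2) * chi x k 0 R"
    for k
  proof (rule mult_chi_Suc_le)
    assume "\<forall>j\<le>Suc k. norm (x j - 0) \<le> R"
    then have "norm (x k) \<le> R" "norm (x (Suc k)) \<le> R" by simp_all
    then show "F (x (Suc k)) - Flb
               \<le> F (x k) - Flb - G (x k) \<bullet> (M k *v G (x k)) + C * (norm (M k *v G (x k)))\<^sup>2"
      unfolding iter by (rule step)
  qed (use nonneg in simp)
  with \<open>C > 0\<close> show "\<exists>C>0. \<forall>k. (F (x (Suc k)) - Flb) * chi x (Suc k) 0 R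
           \<le> (F (x k) - Flb - G (x k) \<bullet> (M k *v G (x k))
               + C * (norm (M k *v G (x k)))\<^sup>2) * chi x k 0 R" by blast
qed

end
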